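(* Let $R>0$, $x_0\in\mathbb{R}^d$ and $u\in\mathcal{P}^F_R(x_0)$. Then $$\sup_{\partial B_r(x_0)}u\ge C r^\beta\qquad\text{for all }0<r<R,$$ where $\beta=\frac{2}{2-\gamma}$ and $C>0$ is a constant depending only on $d$, $\Lambda$ and $\gamma$.
   Context: Fix $d\ge1$, $\Lambda\ge1$, $\gamma\in(1,2)$. $\mathcal{S}_d$ is the space of real symmetric $d\times d$ matrices. Standing assumptions on $F:\mathcal{S}_d\to\mathbb{R}$: (i) uniform ellipticity: $\frac1\Lambda\|P\|\le F(M+P)-F(M)\le\Lambda\|P\|$ for all $M,P\in\mathcal{S}_d$, $P\ge0$; (ii) $F$ is convex, $F(0)=0$, and the trace map is a sub-differential of $F$ at $0$ (i.e. $\mathrm{trace}(M)\le F(M)$ for all $M$); (iii) either $F$ is (Gâteaux) differentiable at $0$, or $F(\lambda M)=\lambda F(M)$ for all $\lambda>0$, $M\in\mathcal{S}_d$. $\mathcal{P}^F_R(x_0)$ is the class of continuous viscosity solutions $u$ of $F(D^2u)=u^{\gamma-1}$, $u\ge0$ in $B_R(x_0)$, such that $x_0\in\partial\{u>0\}$. *)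

theory Defs
  imports "HOL-Analysis.Analysis"
begin

definition sym_mat :: "real^'n^'n \<Rightarrow> bool" where
  "sym_mat M \<longleftrightarrow> transpose M = M"

definition psd_mat :: "real^'n^'n \<Rightarrow> bool" where
  "psd_mat P \<longleftrightarrow> (\<forall>x. 0 \<le> x \<bullet> (P *v x))"

definition mat_norm :: "real^'n^'n \<Rightarrow> real" where
  "mat_norm P = onorm (\<lambda>x. P *v x)"

text \<open>Standing assumptions (i)-(iii) on F (only its values on symmetric matrices matter).\<close>
definition admissible_F :: "real \<Rightarrow> (real^'n^'n \<Rightarrow> real) \<Rightarrow> bool" where
  "admissible_F \<Lambda> F \<longleftrightarrow>
     (\<forall>M P. sym_mat M \<and> sym_mat P \<and> psd_mat P \<longrightarrow>
        mat_norm P / \<Lambda> \<le> F (M + P) - F M \<and> F (M + P) - F M \<le> \<Lambda> * mat_norm P)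
   \<and> convex_on {M. sym_mat M} F
   \<and> F 0 = 0
   \<and> (\<forall>M. sym_mat M \<longrightarrow> trace M \<le> F M)
   \<and> ((\<exists>L. linear L \<and> (\<forall>M. sym_mat M \<longrightarrow>
            ((\<lambda>t. F (t *\<^sub>R M)) has_real_derivative L M) (at 0)))
      \<or> (\<forall>c>0. \<forall>M. sym_mat M \<longrightarrow> F (c *\<^sub>R M) = c * F M))"

definition C2_with :: "(real^'n \<Rightarrow> real) \<Rightarrow> (real^'n \<Rightarrow> real^'n) \<Rightarrow> (real^'n \<Rightarrow> real^'n^'n)
    \<Rightarrow> (real^'n) set \<Rightarrow> bool" where
  "C2_with \<phi> g H S \<longleftrightarrow> open S \<and>
     (\<forall>y\<in>S. (\<phi> has_derivative (\<lambda>h. g y \<bullet> h)) (at y)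
           \<and> (g has_derivative (\<lambda>h. H y *v h)) (at y))
     \<and> continuous_on S H"

text \<open>Viscosity solution of F(D^2 u) = f(u) in the open set \<Omega> (test functions C^2).\<close>
definition visc_sub :: "(real^'n^'n \<Rightarrow> real) \<Rightarrow> (real \<Rightarrow> real) \<Rightarrow> (real^'n) set
    \<Rightarrow> (real^'n \<Rightarrow> real) \<Rightarrow> bool" where
  "visc_sub F f \<Omega> u \<longleftrightarrow>
     (\<forall>x \<phi> g H S. x \<in> S \<and> S \<subseteq> \<Omega> \<and> C2_with \<phi> g H S \<and>
        (\<forall>y\<in>S. u y - \<phi> y \<le> u x - \<phi> x) \<longrightarrow> F (H x) \<ge> f (u x))"

definition visc_super :: "(real^'n^'n \<Rightarrow> real) \<Rightarrow> (real \<Rightarrow> real) \<Rightarrow> (real^'n) set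
    \<Rightarrow> (real^'n \<Rightarrow> real) \<Rightarrow> bool" where
  "visc_super F f \<Omega> u \<longleftrightarrow>
     (\<forall>x \<phi> g H S. x \<in> S \<and> S \<subseteq> \<Omega> \<and> C2_with \<phi> g H S \<and>
        (\<forall>y\<in>S. u y - \<phi> y \<ge> u x - \<phi> x) \<longrightarrow> F (H x) \<le> f (u x))"

definition visc_sol :: "(real^'n^'n \<Rightarrow> real) \<Rightarrow> (real \<Rightarrow> real) \<Rightarrow> (real^'n) set
    \<Rightarrow> (real^'n \<Rightarrow> real) \<Rightarrow> bool" where
  "visc_sol F f \<Omega> u \<longleftrightarrow> continuous_on \<Omega> u \<and> visc_sub F f \<Omega> u \<and> visc_super F f \<Omega> u"

definition classP :: "(real^'n^'n \<Rightarrow> real) \<Rightarrow> real \<Rightarrow> real \<Rightarrow> real^'n \<Rightarrow> (real^'n \<Rightarrow> real) \<Rightarrow> bool" where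
  "classP F \<gamma> R x0 u \<longleftrightarrow>
     visc_sol F (\<lambda>s. s powr (\<gamma> - 1)) (ball x0 R) u
     \<and> (\<forall>x\<in>ball x0 R. 0 \<le> u x)
     \<and> x0 \<in> frontier {x \<in> ball x0 R. 0 < u x}"

end

theory Submission
  imports Defs
begin

text \<open>
  Write \<open>\<beta> = 2 / (2 - \<gamma>)\<close> and \<open>q = u powr (1 / \<beta>)\<close>. Testing the subsolution property
  against the paraboloid \<open>u p + a |x - p|\<^sup>2\<close> with \<open>2 a \<Lambda> < u p powr (\<gamma> - 1)\<close> shows that \<open>u\<close> exceeds
  it somewhere on every sphere around \<open>p\<close>; on the sphere of radius \<open>\<kappa> q p\<close> this means that \<open>q\<close>
  at least doubles, the radius being chosen so that this is scale invariant. Maximising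
  \<open>2 \<kappa> q x - |x - y|\<close> over \<open>B_{r/2}(y)\<close>, for a point \<open>y\<close> near \<open>x0\<close> with \<open>u y > 0\<close>, then yields
  a point \<open>p\<close> with \<open>q p \<ge> r / (6 \<kappa>)\<close>, i.e. \<open>u p \<ge> C r\<^sup>\<beta>\<close>, and the maximum principle moves this
  bound to the sphere \<open>\<partial>B_r(x0)\<close>.
\<close>

lemma scalar_mat_mult_vec [simp]: "((c::real) *\<^sub>R mat 1) *v (x::real^'n) = c *\<^sub>R x"
  by (metis scaleR_matrix_vector_assoc matrix_vector_mul_lid)

lemma mat_norm_scalar_mat: "mat_norm ((c::real) *\<^sub>R (mat 1 :: real^'n^'n)) = \<bar>c\<bar>"
proof -
  have "mat_norm (c *\<^sub>R (mat 1 :: real^'n^'n)) = onorm (\<lambda>x::real^'n. c *\<^sub>R x)"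
    unfolding mat_norm_def scalar_mat_mult_vec ..
  also have "\<dots> = \<bar>c\<bar> * onorm (\<lambda>x::real^'n. x)"
    by (rule onorm_scaleR[OF bounded_linear_ident])
  finally show ?thesis
    by (simp add: onorm_id)
qed

lemma sym_mat_scalar_mat: "sym_mat ((c::real) *\<^sub>R (mat 1 :: real^'n^'n))"
  unfolding sym_mat_def by (simp add: transpose_scalar)

lemma psd_mat_scalar_mat: "0 \<le> c \<Longrightarrow> psd_mat ((c::real) *\<^sub>R (mat 1 :: real^'n^'n))"
  unfolding psd_mat_def by simp

lemma admissible_F_scalar_mat_le:
  assumes "admissible_F \<Lambda> F" and "0 \<le> c"
  shows "F (c *\<^sub>R (mat 1 :: real^'n^'n)) \<le> \<Lambda> * c"
proof -
  have "F (0 *\<^sub>R mat 1 + c *\<^sub>R mat 1) - F (0 *\<^sub>R mat 1) \<le> \<Lambda> * mat_norm (c *\<^sub>R (mat 1 :: real^'n^'n))"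
    using assms sym_mat_scalar_mat psd_mat_scalar_mat unfolding admissible_F_def by blast
  then show ?thesis
    using assms by (simp add: mat_norm_scalar_mat admissible_F_def)
qed

lemma admissible_F_neg_scalar_mat_le:
  assumes "admissible_F \<Lambda> F" and "0 \<le> c"
  shows "F ((- c) *\<^sub>R (mat 1 :: real^'n^'n)) \<le> - c / \<Lambda>"
proof -
  have "mat_norm (c *\<^sub>R (mat 1 :: real^'n^'n)) / \<Lambda>
          \<le> F ((- c) *\<^sub>R mat 1 + c *\<^sub>R mat 1) - F ((- c) *\<^sub>R (mat 1 :: real^'n^'n))"
    using assms sym_mat_scalar_mat psd_mat_scalar_mat unfolding admissible_F_def by blast
  moreover have "(- c) *\<^sub>R mat 1 + c *\<^sub>R (mat 1 :: real^'n^'n) = 0"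
    by (simp flip: scaleR_left_distrib)
  ultimately show ?thesis
    using assms by (simp add: mat_norm_scalar_mat admissible_F_def)
qed

lemma visc_sub_paraboloid_test:
  fixes u :: "real^'n \<Rightarrow> real"
  assumes sub: "visc_sub F f \<Omega> u" and "open S" "S \<subseteq> \<Omega>" "z \<in> S"
    and max: "\<And>y. y \<in> S \<Longrightarrow> u y - c * (norm (y - p))\<^sup>2 \<le> u z - c * (norm (z - p))\<^sup>2"
  shows "f (u z) \<le> F ((2 * c) *\<^sub>R mat 1)"
proof -
  define \<phi> where "\<phi> y = c * ((y - p) \<bullet> (y - p))" for y :: "real^'n"
  define g where "g y = (2 * c) *\<^sub>R (y - p)" for y :: "real^'n"
  define H where "H y = (2 * c) *\<^sub>R (mat 1 :: real^'n^'n)" for y :: "real^'n"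
  have "(\<phi> has_derivative (\<lambda>h. g y \<bullet> h)) (at y)" for y
  proof -
    have "(\<phi> has_derivative (\<lambda>h. c * (h \<bullet> (y - p) + (y - p) \<bullet> h))) (at y)"
      unfolding \<phi>_def by (auto intro!: derivative_eq_intros)
    then show ?thesis
      by (simp add: g_def inner_commute algebra_simps)
  qed
  moreover have "(g has_derivative (\<lambda>h. H y *v h)) (at y)" for y
    unfolding g_def H_def by (auto intro!: derivative_eq_intros)
  ultimately have "C2_with \<phi> g H S"
    using \<open>open S\<close> by (simp add: C2_with_def H_def)
  moreover have "\<forall>y\<in>S. u y - \<phi> y \<le> u z - \<phi> z"
    using max by (simp add: \<phi>_def power2_norm_eq_inner)
  ultimately show ?thesis
    using sub assms(2-4) unfolding visc_sub_def H_def by blast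
qed

text \<open>Adding \<open>\<epsilon> |x - x0|\<^sup>2\<close> moves the maximum into the open ball; the concave paraboloid touching
  there from above would force \<open>0 \<le> f (u z) \<le> F (-2\<epsilon> I) < 0\<close>.\<close>
lemma visc_sub_le_Sup_sphere:
  fixes u :: "real^'n \<Rightarrow> real"
  assumes adm: "admissible_F \<Lambda> F" and "0 < \<Lambda>"
    and sub: "visc_sub F f \<Omega> u" and f_nonneg: "\<And>s. 0 \<le> f s"
    and cont: "continuous_on (cball x0 r) u" and "cball x0 r \<subseteq> \<Omega>" and "0 < r"
    and w: "w \<in> cball x0 r"
  shows "u w \<le> (SUP y\<in>sphere x0 r. u y)"
proof (rule ccontr)
  define M where "M = (SUP y\<in>sphere x0 r. u y)"
  assume "\<not> u w \<le> (SUP y\<in>sphere x0 r. u y)"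
  then have "M < u w"
    by (simp add: M_def)
  have "bdd_above (u ` sphere x0 r)"
    using cont by (meson compact_continuous_image continuous_on_subset compact_sphere
        sphere_cball compact_imp_bounded bounded_imp_bdd_above)
  then have on_sphere: "u y \<le> M" if "y \<in> sphere x0 r" for y
    unfolding M_def using that by (simp add: cSUP_upper)
  define \<epsilon> where "\<epsilon> = (u w - M) / (2 * r\<^sup>2)"
  have "0 < \<epsilon>" and \<epsilon>_r: "2 * (\<epsilon> * r\<^sup>2) = u w - M"
    using \<open>M < u w\<close> \<open>0 < r\<close> by (simp_all add: \<epsilon>_def)
  define v where "v x = u x + \<epsilon> * (norm (x - x0))\<^sup>2" for x
  have "continuous_on (cball x0 r) v"
    unfolding v_def by (intro continuous_intros cont)
  moreover have "cball x0 r \<noteq> {}"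
    using w by blast
  ultimately obtain z where z: "z \<in> cball x0 r" and z_max: "\<And>y. y \<in> cball x0 r \<Longrightarrow> v y \<le> v z"
    by (metis compact_cball continuous_attains_sup)
  have "u w \<le> v w"
    using \<open>0 < \<epsilon>\<close> by (simp add: v_def)
  also have "\<dots> \<le> v z"
    using z_max[OF w] .
  finally have "u w \<le> v z" .
  have "z \<in> ball x0 r"
  proof (rule ccontr)
    assume "z \<notin> ball x0 r"
    with z have "norm (z - x0) = r" and "u z \<le> M"
      using on_sphere by (auto simp: dist_norm norm_minus_commute)
    then have "v z = u z + \<epsilon> * r\<^sup>2"
      by (simp add: v_def)
    with \<open>u w \<le> v z\<close> \<open>M < u w\<close> \<open>u z \<le> M\<close> \<epsilon>_r show False
      by linarith
  qed
  have "f (u z) \<le> F ((2 * - \<epsilon>) *\<^sub>R mat 1)"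
    by (rule visc_sub_paraboloid_test[OF sub _ _ \<open>z \<in> ball x0 r\<close>, where p = x0])
      (use assms z_max in \<open>auto simp: v_def\<close>)
  also have "\<dots> \<le> - (2 * \<epsilon>) / \<Lambda>"
    using admissible_F_neg_scalar_mat_le[OF adm, of "2 * \<epsilon>"] \<open>0 < \<epsilon>\<close> by simp
  also have "\<dots> < 0"
    using \<open>0 < \<epsilon>\<close> \<open>0 < \<Lambda>\<close> by simp
  finally show False
    using f_nonneg by (simp add: not_less[symmetric])
qed

lemma visc_sub_quadratic_growth:
  fixes u :: "real^'n \<Rightarrow> real"
  assumes adm: "admissible_F \<Lambda> F" and sub: "visc_sub F f \<Omega> u"
    and f_mono: "mono_on {u p..} f" and "0 \<le> a" and a_small: "2 * a * \<Lambda> < f (u p)"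
    and cont: "continuous_on (cball p \<rho>) u" and "cball p \<rho> \<subseteq> \<Omega>" and "0 < \<rho>"
  shows "\<exists>w\<in>sphere p \<rho>. u p + a * \<rho>\<^sup>2 \<le> u w"
proof -
  define v where "v x = u x - a * (norm (x - p))\<^sup>2" for x
  have "continuous_on (cball p \<rho>) v"
    unfolding v_def by (intro continuous_intros cont)
  moreover have "cball p \<rho> \<noteq> {}"
    using \<open>0 < \<rho>\<close> by simp
  ultimately obtain z where z: "z \<in> cball p \<rho>" and z_max: "\<And>y. y \<in> cball p \<rho> \<Longrightarrow> v y \<le> v z"
    by (metis compact_cball continuous_attains_sup)
  have "u p \<le> v z"
    using z_max[of p] \<open>0 < \<rho>\<close> by (simp add: v_def)
  have "z \<notin> ball p \<rho>"
  proof
    assume "z \<in> ball p \<rho>"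
    have "v z \<le> u z"
      using \<open>0 \<le> a\<close> by (simp add: v_def)
    with \<open>u p \<le> v z\<close> have "u p \<le> u z"
      by linarith
    then have "f (u p) \<le> f (u z)"
      using f_mono by (simp add: mono_on_def)
    also have "\<dots> \<le> F ((2 * a) *\<^sub>R mat 1)"
      by (rule visc_sub_paraboloid_test[OF sub _ _ \<open>z \<in> ball p \<rho>\<close>, where p = p])
        (use assms z_max in \<open>auto simp: v_def\<close>)
    also have "\<dots> \<le> 2 * a * \<Lambda>"
      using admissible_F_scalar_mat_le[OF adm, of "2 * a"] \<open>0 \<le> a\<close> by (simp add: mult.commute)
    finally show False
      using a_small by linarith
  qed
  with z have "z \<in> sphere p \<rho>" and "norm (z - p) = \<rho>"
    by (auto simp: dist_norm norm_minus_commute)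
  moreover have "v z = u z - a * \<rho>\<^sup>2"
    using \<open>norm (z - p) = \<rho>\<close> by (simp add: v_def)
  ultimately show ?thesis
    using \<open>u p \<le> v z\<close> by (metis add.commute le_diff_eq)
qed

lemma visc_sub_powr_doubling:
  fixes u :: "real^'n \<Rightarrow> real" and \<gamma> :: real
  defines "\<beta> \<equiv> 2 / (2 - \<gamma>)"
  assumes adm: "admissible_F \<Lambda> F" and "0 < \<Lambda>" and "1 < \<gamma>" and "\<gamma> < 2"
    and sub: "visc_sub F (\<lambda>s. s powr (\<gamma> - 1)) \<Omega> u"
    and cont: "continuous_on (cball p \<rho>) u" and "cball p \<rho> \<subseteq> \<Omega>" and "0 < u p"
    and "0 < \<kappa>" and \<kappa>: "4 * \<Lambda> * 2 powr \<beta> \<le> \<kappa>\<^sup>2" and \<rho>: "\<rho> = \<kappa> * u p powr (1 / \<beta>)"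
  shows "\<exists>w\<in>sphere p \<rho>. 2 * u p powr (1 / \<beta>) \<le> u w powr (1 / \<beta>)"
proof -
  define m where "m = u p"
  define a where "a = m powr (\<gamma> - 1) / (4 * \<Lambda>)"
  have "0 < m" and "0 < \<beta>" and "2 / \<beta> = 2 - \<gamma>"
    using assms by (simp_all add: m_def \<beta>_def)
  have "0 < \<rho>"
    using \<open>0 < \<kappa>\<close> \<open>0 < m\<close> by (simp add: \<rho> m_def)
  have mono: "mono_on {u p..} (\<lambda>s. s powr (\<gamma> - 1))"
    using \<open>0 < u p\<close> \<open>1 < \<gamma>\<close> by (intro mono_onI powr_mono2) auto
  have "0 \<le> a"
    using \<open>0 < \<Lambda>\<close> by (simp add: a_def)
  moreover have "2 * a * \<Lambda> < u p powr (\<gamma> - 1)"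
    using \<open>0 < m\<close> \<open>0 < \<Lambda>\<close> by (simp add: a_def m_def field_simps)
  ultimately obtain w where w: "w \<in> sphere p \<rho>" and "m + a * \<rho>\<^sup>2 \<le> u w"
    using visc_sub_quadratic_growth[OF adm sub mono _ _ cont \<open>cball p \<rho> \<subseteq> \<Omega>\<close> \<open>0 < \<rho>\<close>, of a]
    by (auto simp: m_def)
  have "2 powr \<beta> * m = 2 powr \<beta> * (m powr (\<gamma> - 1) * m powr (2 / \<beta>))"
    using \<open>0 < m\<close> \<open>2 / \<beta> = 2 - \<gamma>\<close> by (simp flip: powr_add)
  also have "\<dots> \<le> \<kappa>\<^sup>2 / (4 * \<Lambda>) * (m powr (\<gamma> - 1) * m powr (2 / \<beta>))"
    using \<kappa> \<open>0 < \<Lambda>\<close> by (intro mult_right_mono) (simp_all add: field_simps)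
  also have "\<dots> = a * \<kappa>\<^sup>2 * (m powr (1 / \<beta>))\<^sup>2"
    by (simp add: a_def power2_eq_square flip: powr_add)
  also have "\<dots> = a * \<rho>\<^sup>2"
    by (simp add: \<rho> m_def power_mult_distrib)
  also have "\<dots> \<le> u w"
    using \<open>m + a * \<rho>\<^sup>2 \<le> u w\<close> \<open>0 < m\<close> by linarith
  finally have "(2 powr \<beta> * m) powr (1 / \<beta>) \<le> u w powr (1 / \<beta>)"
    using \<open>0 < m\<close> \<open>0 < \<beta>\<close> by (intro powr_mono2) auto
  then show ?thesis
    using w \<open>0 < m\<close> \<open>0 < \<beta>\<close> by (auto simp: m_def powr_mult powr_powr)
qed

text \<open>Maximise \<open>2 \<kappa> q x - dist x y\<close> over the ball: at a maximiser \<open>p\<close> a doubling point \<open>w\<close> at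
  distance \<open>\<kappa> q p\<close> would increase this quantity, so it has to lie outside the ball.\<close>
lemma doubling_yields_large_value:
  fixes q :: "'a::euclidean_space \<Rightarrow> real"
  assumes cont: "continuous_on (cball y s) q" and "0 \<le> s" and "0 < q y" and "0 < \<kappa>"
    and doubling: "\<And>p. p \<in> cball y s \<Longrightarrow> 0 < q p \<Longrightarrow> \<kappa> * q p \<le> s / 2 \<Longrightarrow>
                     \<exists>w. dist p w = \<kappa> * q p \<and> 2 * q p \<le> q w"
  shows "\<exists>p\<in>cball y s. s \<le> 3 * \<kappa> * q p"
proof -
  define \<Psi> where "\<Psi> x = 2 * \<kappa> * q x - dist x y" for x
  have "continuous_on (cball y s) \<Psi>"
    unfolding \<Psi>_def by (intro continuous_intros cont)
  moreover have "cball y s \<noteq> {}"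
    using \<open>0 \<le> s\<close> by simp
  ultimately obtain p where p: "p \<in> cball y s" and p_max: "\<And>x. x \<in> cball y s \<Longrightarrow> \<Psi> x \<le> \<Psi> p"
    by (metis compact_cball continuous_attains_sup)
  have "0 < \<Psi> y"
    using \<open>0 < q y\<close> \<open>0 < \<kappa>\<close> by (simp add: \<Psi>_def)
  also have "\<dots> \<le> \<Psi> p"
    using p_max \<open>0 \<le> s\<close> by simp
  finally have "dist p y < 2 * \<kappa> * q p"
    by (simp add: \<Psi>_def)
  then have "0 < q p"
    using \<open>0 < \<kappa>\<close> by (smt (verit) zero_le_dist zero_less_mult_iff)
  show ?thesis
  proof (cases "\<kappa> * q p \<le> s / 2")
    case True
    then obtain w where w: "dist p w = \<kappa> * q p" and "2 * q p \<le> q w"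
      using doubling p \<open>0 < q p\<close> by blast
    have "dist w y \<le> dist p y + \<kappa> * q p"
      using w dist_triangle[of w y p] by (simp add: dist_commute)
    moreover have "4 * \<kappa> * q p \<le> 2 * \<kappa> * q w"
      using mult_left_mono[OF \<open>2 * q p \<le> q w\<close>, of "2 * \<kappa>"] \<open>0 < \<kappa>\<close> by simp
    moreover have "0 < \<kappa> * q p"
      using \<open>0 < \<kappa>\<close> \<open>0 < q p\<close> by simp
    ultimately have "\<Psi> p < \<Psi> w"
      unfolding \<Psi>_def by linarith
    then have "w \<notin> cball y s"
      using p_max by (meson not_le)
    then have "s < dist w y"
      by (simp add: dist_commute)
    with \<open>dist w y \<le> dist p y + \<kappa> * q p\<close> \<open>dist p y < 2 * \<kappa> * q p\<close> p show ?thesis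
      by (intro bexI[OF _ p]) linarith
  next
    case False
    moreover have "0 < \<kappa> * q p"
      using \<open>0 < \<kappa>\<close> \<open>0 < q p\<close> by simp
    ultimately show ?thesis
      by (intro bexI[OF _ p]) linarith
  qed
qed

lemma visc_sub_nondegenerate_Sup_sphere:
  fixes u :: "real^'n \<Rightarrow> real" and \<gamma> \<Lambda> :: real
  defines "\<beta> \<equiv> 2 / (2 - \<gamma>)" and "\<kappa> \<equiv> 2 * sqrt (\<Lambda> * 2 powr (2 / (2 - \<gamma>)))"
  assumes adm: "admissible_F \<Lambda> F" and "0 < \<Lambda>" and "1 < \<gamma>" and "\<gamma> < 2"
    and sub: "visc_sub F (\<lambda>s. s powr (\<gamma> - 1)) (ball x0 R) u"
    and cont: "continuous_on (ball x0 R) u" and nonneg: "\<And>x. x \<in> ball x0 R \<Longrightarrow> 0 \<le> u x"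
    and "0 < r" and "r < R" and "0 < u y" and "dist y x0 < r / 4"
  shows "(r / (6 * \<kappa>)) powr \<beta> \<le> (SUP z\<in>sphere x0 r. u z)"
proof -
  define q where "q x = u x powr (1 / \<beta>)" for x
  have "0 < \<beta>" and "0 < \<kappa>" and \<kappa>_sq: "4 * \<Lambda> * 2 powr \<beta> \<le> \<kappa>\<^sup>2"
    using assms by (simp_all add: \<beta>_def \<kappa>_def power_mult_distrib)
  have "ball x0 r \<subseteq> ball x0 R"
    using \<open>r < R\<close> by auto
  have near: "cball p \<rho> \<subseteq> ball x0 r" if "p \<in> cball y (r / 2)" and "\<rho> \<le> r / 4" for p \<rho>
  proof
    fix x
    assume "x \<in> cball p \<rho>"
    moreover have "dist x0 x \<le> dist x0 y + dist y p + dist p x"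
      by (metis dist_triangle add_right_mono order_trans)
    ultimately show "x \<in> ball x0 r"
      using that \<open>dist y x0 < r / 4\<close> by (simp add: dist_commute)
  qed
  then have K: "cball y (r / 2) \<subseteq> ball x0 r"
    using \<open>0 < r\<close> near[of _ 0] by fastforce
  have "continuous_on (cball y (r / 2)) q"
    unfolding q_def using K \<open>ball x0 r \<subseteq> ball x0 R\<close> \<open>0 < \<beta>\<close> nonneg
    by (intro continuous_on_powr' continuous_on_subset[OF cont] continuous_intros) auto
  moreover have "0 < q y"
    using \<open>0 < u y\<close> by (simp add: q_def)
  moreover have "\<exists>w. dist p w = \<kappa> * q p \<and> 2 * q p \<le> q w"
    if "p \<in> cball y (r / 2)" and "0 < q p" and "\<kappa> * q p \<le> r / 2 / 2" for p
  proof -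
    have "cball p (\<kappa> * q p) \<subseteq> ball x0 R"
      using near[OF that(1)] that(3) \<open>ball x0 r \<subseteq> ball x0 R\<close> by auto
    moreover have "0 < u p"
      using that K \<open>ball x0 r \<subseteq> ball x0 R\<close> nonneg[of p] by (force simp: q_def)
    ultimately have "\<exists>w\<in>sphere p (\<kappa> * q p). 2 * q p \<le> q w"
      unfolding q_def \<beta>_def
      by (intro visc_sub_powr_doubling[OF adm \<open>0 < \<Lambda>\<close> \<open>1 < \<gamma>\<close> \<open>\<gamma> < 2\<close> sub
            continuous_on_subset[OF cont] _ _ \<open>0 < \<kappa>\<close> \<kappa>_sq[unfolded \<beta>_def]])
        (simp_all add: q_def \<beta>_def)
    then show ?thesis
      by auto
  qed
  ultimately obtain p where p: "p \<in> cball y (r / 2)" and "r / 2 \<le> 3 * \<kappa> * q p"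
    using doubling_yields_large_value[of y "r / 2" q \<kappa>] \<open>0 < r\<close> \<open>0 < \<kappa>\<close> by auto
  then have "r / (6 * \<kappa>) \<le> q p"
    using \<open>0 < \<kappa>\<close> by (simp add: field_simps)
  then have "(r / (6 * \<kappa>)) powr \<beta> \<le> q p powr \<beta>"
    using \<open>0 < r\<close> \<open>0 < \<kappa>\<close> \<open>0 < \<beta>\<close> by (intro powr_mono2) auto
  also have "\<dots> = u p"
    using nonneg[of p] p K \<open>ball x0 r \<subseteq> ball x0 R\<close> \<open>0 < \<beta>\<close>
    by (auto simp: q_def powr_powr subset_iff)
  also have "\<dots> \<le> (SUP z\<in>sphere x0 r. u z)"
    using p K \<open>ball x0 r \<subseteq> ball x0 R\<close> \<open>0 < r\<close> \<open>r < R\<close>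
    by (intro visc_sub_le_Sup_sphere[OF adm \<open>0 < \<Lambda>\<close> sub _ continuous_on_subset[OF cont]])
      auto
  finally show ?thesis .
qed

theorem corollary2p10:
  fixes \<Lambda> \<gamma> :: real
  assumes "\<Lambda> \<ge> 1" and "1 < \<gamma>" and "\<gamma> < 2"
  shows "\<exists>C>0. \<forall>(F :: real^'n^'n \<Rightarrow> real) R (x0 :: real^'n) u.
           admissible_F \<Lambda> F \<and> R > 0 \<and> classP F \<gamma> R x0 u \<longrightarrow>
           (\<forall>r. 0 < r \<and> r < R \<longrightarrow>
              (SUP y\<in>sphere x0 r. u y) \<ge> C * r powr (2 / (2 - \<gamma>)))"
proof -
  define \<beta> where "\<beta> = 2 / (2 - \<gamma>)"
  define \<kappa> where "\<kappa> = 2 * sqrt (\<Lambda> * 2 powr \<beta>)"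
  have "0 < \<kappa>"
    using assms by (simp add: \<kappa>_def)
  show ?thesis
  proof (intro exI[of _ "(1 / (6 * \<kappa>)) powr \<beta>"] conjI allI impI)
    show "0 < (1 / (6 * \<kappa>)) powr \<beta>"
      using \<open>0 < \<kappa>\<close> by simp
    fix F :: "real^'n^'n \<Rightarrow> real" and R and x0 :: "real^'n" and u r
    assume "admissible_F \<Lambda> F \<and> 0 < R \<and> classP F \<gamma> R x0 u" and r: "0 < r \<and> r < R"
    then have adm: "admissible_F \<Lambda> F" and sub: "visc_sub F (\<lambda>s. s powr (\<gamma> - 1)) (ball x0 R) u"
      and cont: "continuous_on (ball x0 R) u" and nonneg: "\<forall>x\<in>ball x0 R. 0 \<le> u x"
      and "x0 \<in> closure {x \<in> ball x0 R. 0 < u x}"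
      by (auto simp: classP_def visc_sol_def frontier_def)
    then obtain y where "0 < u y" and "dist y x0 < r / 4"
      using r unfolding closure_approachable by (metis (no_types, lifting) mem_Collect_eq zero_less_divide_iff zero_less_numeral)
    then have "(r / (6 * \<kappa>)) powr \<beta> \<le> (SUP z\<in>sphere x0 r. u z)"
      using visc_sub_nondegenerate_Sup_sphere[OF adm _ assms(2,3) sub cont] assms r nonneg
      unfolding \<beta>_def \<kappa>_def by auto
    then show "(1 / (6 * \<kappa>)) powr \<beta> * r powr (2 / (2 - \<gamma>)) \<le> (SUP y\<in>sphere x0 r. u y)"
      using r \<open>0 < \<kappa>\<close> by (simp add: \<beta>_def powr_mult[symmetric])
  qed
qed

end
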